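(* Let $n\ge1$. As polynomials in the indeterminates $x$ and $y$ with coefficients in $\mathbb{Q}[\mathfrak{B}_n]$, \[\rho_B(x)\rho_B(y)=\rho_B(xy),\qquad\text{where }\rho_B(x)=\sum_{\pi\in\mathfrak{B}_n}\Omega'_B(\pi;(x-1)/4)\,\pi.\]
   Context: $\mathfrak{B}_n$ is the hyperoctahedral group of signed permutations: bijections $\pi$ of $\{-n,\dots,-1,0,1,\dots,n\}$ with $\pi(-i)=-\pi(i)$, written as words $(\pi(1),\dots,\pi(n))$, with $\pi(0)=0$; multiplication in $\mathbb{Q}[\mathfrak{B}_n]$ is composition. For an integer $k\ge0$ let $Z_k$ be the totally ordered set $0<\bar1<1<\bar2<2<\dots<\bar k<k$, where $0$ and unbarred $j$ are "plus-type" and barred $\bar j$ are "minus-type". The type B enriched order polynomial $\Omega'_B(\pi;k)$ is the number of sequences $(a_1,\dots,a_n)\in Z_k^n$ such that, setting $a_0=0$, we have $a_0\le a_1\le\dots\le a_n$ and for every $s\in\{0,1,\dots,n-1\}$: if $\pi(s)<\pi(s+1)$ then $a_s<a_{s+1}$ or ($a_s=a_{s+1}$ is plus-type); if $\pi(s)>\pi(s+1)$ then $a_s<a_{s+1}$ or ($a_s=a_{s+1}$ is minus-type). As a function of $k$ this is the restriction of a unique polynomial with rational coefficients, denoted by the same symbol. *)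

theory Defs
  imports "HOL-Combinatorics.Permutations" "HOL-Computational_Algebra.Polynomial" "HOL-Library.FuncSet"
begin

definition signed_perms :: "nat \<Rightarrow> (int \<Rightarrow> int) set" where
  "signed_perms n = {\<pi>. \<pi> permutes {- int n .. int n} \<and> (\<forall>i. \<pi> (- i) = - \<pi> i)}"

text \<open>Encoding of Z_k = 0 < 1bar < 1 < 2bar < 2 < ... < kbar < k as {0..2k}:
  0 is 0, jbar is 2j-1, j is 2j.  Plus-type = even code, minus-type = odd code.\<close>
definition Zk :: "nat \<Rightarrow> nat set" where
  "Zk k = {0 .. 2 * k}"

definition plus_type :: "nat \<Rightarrow> bool" where
  "plus_type z \<longleftrightarrow> even z"

definition minus_type :: "nat \<Rightarrow> bool" where
  "minus_type z \<longleftrightarrow> odd z"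

definition enriched_seqs :: "nat \<Rightarrow> (int \<Rightarrow> int) \<Rightarrow> nat \<Rightarrow> (nat \<Rightarrow> nat) set" where
  "enriched_seqs n \<pi> k = {a. a \<in> {0..n} \<rightarrow>\<^sub>E Zk k \<and> a 0 = 0 \<and>
     (\<forall>s<n. a s \<le> a (Suc s) \<and>
        (\<pi> (int s) < \<pi> (int (Suc s)) \<longrightarrow> a s < a (Suc s) \<or> (a s = a (Suc s) \<and> plus_type (a s))) \<and>
        (\<pi> (int s) > \<pi> (int (Suc s)) \<longrightarrow> a s < a (Suc s) \<or> (a s = a (Suc s) \<and> minus_type (a s))))}"

definition omegaB :: "nat \<Rightarrow> (int \<Rightarrow> int) \<Rightarrow> nat \<Rightarrow> nat" where
  "omegaB n \<pi> k = card (enriched_seqs n \<pi> k)"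

definition omegaB_poly :: "nat \<Rightarrow> (int \<Rightarrow> int) \<Rightarrow> rat poly" where
  "omegaB_poly n \<pi> = (THE p. \<forall>k. poly p (of_nat k) = of_nat (omegaB n \<pi> k))"

text \<open>Group algebra Q[B_n]: coefficient functions supported on signed_perms n.\<close>
definition ga_mult :: "nat \<Rightarrow> ((int \<Rightarrow> int) \<Rightarrow> rat) \<Rightarrow> ((int \<Rightarrow> int) \<Rightarrow> rat) \<Rightarrow> ((int \<Rightarrow> int) \<Rightarrow> rat)" where
  "ga_mult n f g = (\<lambda>\<sigma>. \<Sum>\<pi>\<in>signed_perms n. \<Sum>\<tau>\<in>signed_perms n.
       if \<pi> \<circ> \<tau> = \<sigma> then f \<pi> * g \<tau> else 0)"

definition rhoB :: "nat \<Rightarrow> rat \<Rightarrow> ((int \<Rightarrow> int) \<Rightarrow> rat)" where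
  "rhoB n x = (\<lambda>\<pi>. if \<pi> \<in> signed_perms n then poly (omegaB_poly n \<pi>) ((x - 1) / 4) else 0)"

end

theory Submission
  imports Defs
begin

text \<open>Both sides are polynomial in \<open>x\<close> and \<open>y\<close>, so it suffices to compare them at
  \<open>x = 4 k + 1\<close>, \<open>y = 4 l + 1\<close> for natural \<open>k\<close>, \<open>l\<close>. As \<open>(4 k + 1) (4 l + 1) = 4 (4 k l + k + l) + 1\<close>,
  this is the convolution identity: the sum of \<open>\<Omega>'(\<pi>; k) \<Omega>'(\<tau>; l)\<close> over \<open>\<pi> \<tau> = \<sigma>\<close> is
  \<open>\<Omega>'(\<sigma>; 4 k l + k + l)\<close>, which is proved bijectively.
  An enriched P-partition \<open>a\<close> of \<open>\<pi>\<close> with values in \<open>Z\<^sub>k\<close> becomes the odd function \<open>g\<close> on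
  \<open>{-n..n}\<close> with \<open>g (\<pi> s) = a s\<close> and values in \<open>{-2k..2k}\<close>; conversely \<open>g\<close> determines \<open>\<pi>\<close> as the
  unique signed permutation along which \<open>g\<close> increases, ties being broken by position, upwards
  at even and downwards at odd values. Two such functions for the bounds \<open>k\<close> and \<open>l\<close> combine,
  as the low and high digits in the balanced base \<open>4 k + 1\<close>, into one for the bound
  \<open>4 k l + k + l\<close> whose permutation is the product of theirs, and every function for that
  bound arises exactly once. Polynomiality of \<open>\<Omega>'(\<pi>; k)\<close> in \<open>k\<close> follows from a recursion on
  the largest value.\<close>

section \<open>Polynomial sequences\<close>

definition polynomial_seq :: "(nat \<Rightarrow> 'a::field_char_0) \<Rightarrow> bool" where
  "polynomial_seq f \<longleftrightarrow> (\<exists>p. \<forall>k. poly p (of_nat k) = f k)"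

lemma polynomial_seq_const: "polynomial_seq (\<lambda>k. c)"
  unfolding polynomial_seq_def by (rule exI[of _ "[:c:]"]) simp

lemma polynomial_seq_power: "polynomial_seq (\<lambda>k. of_nat k ^ i)"
  unfolding polynomial_seq_def by (rule exI[of _ "monom 1 i"]) (simp add: poly_monom)

lemma polynomial_seq_add: "polynomial_seq f \<Longrightarrow> polynomial_seq g \<Longrightarrow> polynomial_seq (\<lambda>k. f k + g k)"
  unfolding polynomial_seq_def by (metis poly_add)

lemma polynomial_seq_diff: "polynomial_seq f \<Longrightarrow> polynomial_seq g \<Longrightarrow> polynomial_seq (\<lambda>k. f k - g k)"
  unfolding polynomial_seq_def by (metis poly_diff)

lemma polynomial_seq_cmult: "polynomial_seq f \<Longrightarrow> polynomial_seq (\<lambda>k. c * f k)"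
  unfolding polynomial_seq_def by (metis poly_smult)

lemma polynomial_seq_sum:
  "finite A \<Longrightarrow> (\<And>a. a \<in> A \<Longrightarrow> polynomial_seq (f a)) \<Longrightarrow> polynomial_seq (\<lambda>k. \<Sum>a\<in>A. f a k)"
  by (induction A rule: finite_induct) (simp_all add: polynomial_seq_const polynomial_seq_add)

lemma polynomial_seq_power_sums: "polynomial_seq (\<lambda>k. \<Sum>t<k. (of_nat t :: 'a::field_char_0) ^ i)"
proof (induction i rule: less_induct)
  case (less i)
  define S :: "nat \<Rightarrow> nat \<Rightarrow> 'a" where "S j k = (\<Sum>t<k. of_nat t ^ j)" for j k
  have binomial_telescope: "of_nat k ^ Suc i = (\<Sum>j\<le>i. of_nat (Suc i choose j) * S j k)" for k
  proof -
    have "(of_nat k :: 'a) ^ Suc i = (\<Sum>t<k. of_nat (Suc t) ^ Suc i - of_nat t ^ Suc i)"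
      by (subst sum_lessThan_telescope) simp
    also have "\<dots> = (\<Sum>t<k. \<Sum>j\<le>i. of_nat (Suc i choose j) * of_nat t ^ j)"
    proof (rule sum.cong[OF refl])
      fix t
      have "(of_nat (Suc t) :: 'a) ^ Suc i = (\<Sum>j\<le>Suc i. of_nat (Suc i choose j) * of_nat t ^ j)"
        using binomial_ring[of "of_nat t :: 'a" 1 "Suc i"] by (simp add: add.commute)
      then show "(of_nat (Suc t) :: 'a) ^ Suc i - of_nat t ^ Suc i
          = (\<Sum>j\<le>i. of_nat (Suc i choose j) * of_nat t ^ j)"
        by (simp add: atMost_Suc)
    qed
    also have "\<dots> = (\<Sum>j\<le>i. of_nat (Suc i choose j) * S j k)"
      unfolding S_def by (subst sum.swap) (simp add: sum_distrib_left)
    finally show ?thesis .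
  qed
  have "S i = (\<lambda>k. (of_nat k ^ Suc i - (\<Sum>j<i. of_nat (Suc i choose j) * S j k)) / of_nat (Suc i))"
  proof
    fix k
    show "S i k = (of_nat k ^ Suc i - (\<Sum>j<i. of_nat (Suc i choose j) * S j k)) / of_nat (Suc i)"
    proof -
      have "of_nat k ^ Suc i = (\<Sum>j<i. of_nat (Suc i choose j) * S j k) + of_nat (Suc i) * S i k"
        using binomial_telescope[of k] by (simp add: lessThan_Suc_atMost[symmetric])
      then show ?thesis
        by (simp add: eq_divide_eq del: of_nat_Suc)
    qed
  qed
  moreover have "polynomial_seq (\<lambda>k. (of_nat k ^ Suc i - (\<Sum>j<i. of_nat (Suc i choose j) * S j k)) / of_nat (Suc i))"
    unfolding divide_inverse mult.commute[of _ "inverse _"]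
    by (intro polynomial_seq_cmult polynomial_seq_diff polynomial_seq_power polynomial_seq_sum)
      (auto simp: S_def intro: less.IH)
  ultimately show ?case
    unfolding S_def by metis
qed

lemma polynomial_seq_partial_sums:
  assumes "polynomial_seq f"
  shows "polynomial_seq (\<lambda>k. \<Sum>t<k. f t)"
proof -
  obtain p where p: "\<And>k. poly p (of_nat k) = f k"
    using assms unfolding polynomial_seq_def by blast
  have "(\<Sum>t<k. f t) = (\<Sum>i\<le>degree p. coeff p i * (\<Sum>t<k. of_nat t ^ i))" for k
    by (simp add: p[symmetric] poly_altdef sum_distrib_left) (subst sum.swap, simp)
  moreover have "polynomial_seq (\<lambda>k. \<Sum>i\<le>degree p. coeff p i * (\<Sum>t<k. of_nat t ^ i))"
    by (intro polynomial_seq_sum polynomial_seq_cmult polynomial_seq_power_sums) simp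
  ultimately show ?thesis
    by simp
qed

lemma polynomial_seq_of_differences:
  assumes "polynomial_seq (\<lambda>k. f (Suc k) - f k)"
  shows "polynomial_seq f"
proof -
  have "f = (\<lambda>k. f 0 + (\<Sum>t<k. f (Suc t) - f t))"
    by (simp add: sum_lessThan_telescope)
  then show ?thesis
    using polynomial_seq_add[OF polynomial_seq_const polynomial_seq_partial_sums[OF assms]] by metis
qed

lemma poly_eq_if_agree_on_nat:
  fixes p q :: "'a::field_char_0 poly"
  assumes "\<And>k. poly p (of_nat k) = poly q (of_nat k)"
  shows "p = q"
proof (rule ccontr)
  assume "p \<noteq> q"
  then have "finite {x. poly (p - q) x = 0}"
    by (intro poly_roots_finite) simp
  moreover have "range of_nat \<subseteq> {x. poly (p - q) x = 0}"
    using assms by auto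
  ultimately show False
    using range_inj_infinite[OF inj_of_nat] finite_subset by blast
qed

lemma poly_fun_eq_if_agree_on_nat_pairs:
  fixes f g :: "'a::field_char_0 \<Rightarrow> 'a \<Rightarrow> 'a"
  assumes "\<And>x. \<exists>p. \<forall>y. f x y = poly p y" "\<And>x. \<exists>p. \<forall>y. g x y = poly p y"
    and "\<And>y. \<exists>p. \<forall>x. f x y = poly p x" "\<And>y. \<exists>p. \<forall>x. g x y = poly p x"
    and nat: "\<And>k l. f (of_nat k) (of_nat l) = g (of_nat k) (of_nat l)"
  shows "f x y = g x y"
proof -
  have eq_if_agree: "\<forall>z. F z = G z"
    if F: "\<exists>p. \<forall>z. F z = poly p z" and G: "\<exists>p. \<forall>z. G z = poly p z"
      and agree: "\<And>k. F (of_nat k) = G (of_nat k)"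
    for F G :: "'a \<Rightarrow> 'a"
  proof -
    obtain p q where "\<forall>z. F z = poly p z" "\<forall>z. G z = poly q z"
      using F G by blast
    moreover from this have "p = q"
      using agree by (intro poly_eq_if_agree_on_nat) simp
    ultimately show ?thesis
      by simp
  qed
  have "f (of_nat k) z = g (of_nat k) z" for k z
    using eq_if_agree[of "f (of_nat k)" "g (of_nat k)"] assms(1,2) nat by blast
  then show ?thesis
    using eq_if_agree[of "\<lambda>z. f z y" "\<lambda>z. g z y"] assms(3,4) by blast
qed

section \<open>Polynomiality of the enriched order polynomial\<close>

definition admissible_step :: "(int \<Rightarrow> int) \<Rightarrow> nat \<Rightarrow> nat \<Rightarrow> nat \<Rightarrow> bool" where
  "admissible_step \<sigma> s x y \<longleftrightarrow> x \<le> y \<and>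
     (\<sigma> (int s) < \<sigma> (int (Suc s)) \<longrightarrow> x < y \<or> (x = y \<and> even x)) \<and>
     (\<sigma> (int s) > \<sigma> (int (Suc s)) \<longrightarrow> x < y \<or> (x = y \<and> odd x))"

text \<open>The bound \<open>w\<close> need not be even: odd bounds occur in the recursion in \<open>w\<close>.\<close>

definition bounded_seqs :: "(int \<Rightarrow> int) \<Rightarrow> nat \<Rightarrow> nat \<Rightarrow> (nat \<Rightarrow> nat) set" where
  "bounded_seqs \<sigma> m w = {a \<in> {0..m} \<rightarrow>\<^sub>E {0..w}. a 0 = 0 \<and> (\<forall>s<m. admissible_step \<sigma> s (a s) (a (Suc s)))}"

lemma enriched_seqs_eq_bounded_seqs: "enriched_seqs n \<sigma> k = bounded_seqs \<sigma> n (2 * k)"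
  unfolding enriched_seqs_def bounded_seqs_def admissible_step_def Zk_def plus_type_def minus_type_def
  by auto

lemma finite_bounded_seqs: "finite (bounded_seqs \<sigma> m w)"
  by (rule finite_subset[of _ "{0..m} \<rightarrow>\<^sub>E {0..w}"]) (auto simp: bounded_seqs_def finite_PiE)

lemma bounded_seqs_mono:
  assumes "a \<in> bounded_seqs \<sigma> m w" "i \<le> j" "j \<le> m"
  shows "a i \<le> a j"
  using assms(2,3)
proof (induction j)
  case (Suc j)
  then show ?case
    using assms(1) unfolding bounded_seqs_def admissible_step_def
    by (cases "i = Suc j") (auto intro: order.trans)
qed simp

definition flat_admissible :: "(int \<Rightarrow> int) \<Rightarrow> nat \<Rightarrow> nat \<Rightarrow> nat \<Rightarrow> bool" where
  "flat_admissible \<sigma> s m v \<longleftrightarrow> (\<forall>i. s < i \<and> i < m \<longrightarrow> admissible_step \<sigma> i v v)"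

lemma flat_admissible_mod_2: "flat_admissible \<sigma> s m v = flat_admissible \<sigma> s m (v mod 2)"
  unfolding flat_admissible_def admissible_step_def by simp

lemma flat_admissible_self: "flat_admissible \<sigma> m m v"
  unfolding flat_admissible_def by auto

definition raise_tail :: "nat \<Rightarrow> nat \<Rightarrow> nat \<Rightarrow> (nat \<Rightarrow> nat) \<Rightarrow> nat \<Rightarrow> nat" where
  "raise_tail m s w b = (\<lambda>i. if i \<le> s then b i else if i \<le> m then Suc w else undefined)"

lemma raise_tail_in_bounded_seqs:
  assumes "s \<le> m" "flat_admissible \<sigma> s m (Suc w)" "b \<in> bounded_seqs \<sigma> s w"
  shows "raise_tail m s w b \<in> bounded_seqs \<sigma> m (Suc w)"
proof -
  have b_le: "b i \<le> w" if "i \<le> s" for i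
    using assms(3) that unfolding bounded_seqs_def by auto
  have "admissible_step \<sigma> t (raise_tail m s w b t) (raise_tail m s w b (Suc t))" if "t < m" for t
  proof (cases t s rule: linorder_cases)
    case less
    then show ?thesis
      using assms(3) unfolding raise_tail_def bounded_seqs_def by auto
  next
    case equal
    then show ?thesis
      using b_le[of s] that unfolding raise_tail_def admissible_step_def by auto
  next
    case greater
    then show ?thesis
      using assms(2) that unfolding raise_tail_def flat_admissible_def by auto
  qed
  moreover have "raise_tail m s w b \<in> {0..m} \<rightarrow>\<^sub>E {0..Suc w}"
    using b_le assms(1) unfolding raise_tail_def by (auto simp: le_SucI)
  ultimately show ?thesis
    using assms(3) unfolding bounded_seqs_def raise_tail_def by auto
qed

lemma bounded_seqs_SucE:
  assumes a: "a \<in> bounded_seqs \<sigma> m (Suc w)"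
  obtains s b where "s \<le> m" "flat_admissible \<sigma> s m (Suc w)" "b \<in> bounded_seqs \<sigma> s w"
    "a = raise_tail m s w b"
proof -
  define s where "s = Max {i. i \<le> m \<and> a i \<le> w}"
  have fin: "finite {i. i \<le> m \<and> a i \<le> w}"
    by simp
  have "0 \<in> {i. i \<le> m \<and> a i \<le> w}"
    using a unfolding bounded_seqs_def by auto
  then have "s \<in> {i. i \<le> m \<and> a i \<le> w}"
    unfolding s_def using fin by (intro Max_in) auto
  then have sm: "s \<le> m" and asw: "a s \<le> w"
    by auto
  have top: "a i = Suc w" if "s < i" "i \<le> m" for i
  proof -
    have "\<not> a i \<le> w"
      using that Max_ge[OF fin, of i] unfolding s_def[symmetric] by auto
    moreover have "a i \<le> Suc w"
      using a that unfolding bounded_seqs_def by auto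
    ultimately show ?thesis
      by simp
  qed
  have "a i \<le> w" if "i \<le> s" for i
    using bounded_seqs_mono[OF a that sm] asw by simp
  then have restr: "restrict a {0..s} \<in> bounded_seqs \<sigma> s w"
    using a sm unfolding bounded_seqs_def by auto
  have flat: "flat_admissible \<sigma> s m (Suc w)"
    unfolding flat_admissible_def
  proof (intro allI impI)
    fix i
    assume "s < i \<and> i < m"
    then show "admissible_step \<sigma> i (Suc w) (Suc w)"
      using a top[of i] top[of "Suc i"] unfolding bounded_seqs_def by auto
  qed
  have eq: "a = raise_tail m s w (restrict a {0..s})"
  proof
    fix i
    consider "i \<le> s" | "s < i" "i \<le> m" | "m < i"
      by linarith
    then show "a i = raise_tail m s w (restrict a {0..s}) i"
    proof cases
      case 1
      then show ?thesis
        unfolding raise_tail_def by simp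
    next
      case 2
      then show ?thesis
        using top unfolding raise_tail_def by simp
    next
      case 3
      have "a \<in> {0..m} \<rightarrow>\<^sub>E {0..Suc w}"
        using a unfolding bounded_seqs_def by simp
      then have "a i = undefined"
        by (rule PiE_arb) (use 3 in simp)
      then show ?thesis
        using 3 sm unfolding raise_tail_def by simp
    qed
  qed
  show ?thesis
    by (rule that[OF sm flat restr eq])
qed

lemma bounded_seqs_Suc:
  "bounded_seqs \<sigma> m (Suc w) =
     (\<Union>s\<in>{s. s \<le> m \<and> flat_admissible \<sigma> s m (Suc w)}. raise_tail m s w ` bounded_seqs \<sigma> s w)"
proof
  show "bounded_seqs \<sigma> m (Suc w) \<subseteq>
      (\<Union>s\<in>{s. s \<le> m \<and> flat_admissible \<sigma> s m (Suc w)}. raise_tail m s w ` bounded_seqs \<sigma> s w)"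
  proof
    fix a
    assume "a \<in> bounded_seqs \<sigma> m (Suc w)"
    then obtain s b where "s \<le> m" "flat_admissible \<sigma> s m (Suc w)" "b \<in> bounded_seqs \<sigma> s w"
      "a = raise_tail m s w b"
      by (rule bounded_seqs_SucE)
    then show "a \<in> (\<Union>s\<in>{s. s \<le> m \<and> flat_admissible \<sigma> s m (Suc w)}. raise_tail m s w ` bounded_seqs \<sigma> s w)"
      by blast
  qed
qed (use raise_tail_in_bounded_seqs in blast)

lemma inj_on_raise_tail: "inj_on (raise_tail m s w) (bounded_seqs \<sigma> s w)"
proof
  fix b1 b2
  assume b: "b1 \<in> bounded_seqs \<sigma> s w" "b2 \<in> bounded_seqs \<sigma> s w"
    and eq: "raise_tail m s w b1 = raise_tail m s w b2"
  have ext: "b1 \<in> {0..s} \<rightarrow>\<^sub>E {0..w}" "b2 \<in> {0..s} \<rightarrow>\<^sub>E {0..w}"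
    using b unfolding bounded_seqs_def by auto
  show "b1 = b2"
  proof
    fix i
    show "b1 i = b2 i"
    proof (cases "i \<le> s")
      case True
      then show ?thesis
        using fun_cong[OF eq, of i] unfolding raise_tail_def by simp
    next
      case False
      then show ?thesis
        using PiE_arb[OF ext(1), of i] PiE_arb[OF ext(2), of i] by simp
    qed
  qed
qed

lemma raise_tail_images_disjoint:
  assumes "s1 < s2" "s2 \<le> m" "b2 \<in> bounded_seqs \<sigma> s2 w"
  shows "raise_tail m s1 w b1 \<noteq> raise_tail m s2 w b2"
proof -
  have "b2 s2 \<le> w"
    using assms(3) unfolding bounded_seqs_def by auto
  then have "raise_tail m s1 w b1 s2 \<noteq> raise_tail m s2 w b2 s2"
    using assms(1,2) unfolding raise_tail_def by auto
  then show ?thesis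
    by metis
qed

lemma card_bounded_seqs_Suc:
  "card (bounded_seqs \<sigma> m (Suc w)) =
     (\<Sum>s | s \<le> m \<and> flat_admissible \<sigma> s m (Suc w). card (bounded_seqs \<sigma> s w))"
proof -
  let ?S = "{s. s \<le> m \<and> flat_admissible \<sigma> s m (Suc w)}"
  have "card (bounded_seqs \<sigma> m (Suc w)) = (\<Sum>s\<in>?S. card (raise_tail m s w ` bounded_seqs \<sigma> s w))"
    unfolding bounded_seqs_Suc
  proof (rule card_UN_disjoint)
    show "\<forall>s1\<in>?S. \<forall>s2\<in>?S. s1 \<noteq> s2 \<longrightarrow>
        raise_tail m s1 w ` bounded_seqs \<sigma> s1 w \<inter> raise_tail m s2 w ` bounded_seqs \<sigma> s2 w = {}"
      using raise_tail_images_disjoint by (fastforce simp: neq_iff)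
  qed (auto simp: finite_bounded_seqs)
  also have "\<dots> = (\<Sum>s\<in>?S. card (bounded_seqs \<sigma> s w))"
    by (simp add: card_image inj_on_raise_tail)
  finally show ?thesis .
qed

text \<open>Raising the bound by one depends only on its parity, so the counts for even and for odd
  bounds are shown to be polynomial simultaneously.\<close>

lemma polynomial_seq_card_bounded_seqs:
  "polynomial_seq (\<lambda>k. of_nat (card (bounded_seqs \<sigma> m (2 * k))) :: 'a::field_char_0) \<and>
   polynomial_seq (\<lambda>k. of_nat (card (bounded_seqs \<sigma> m (Suc (2 * k)))) :: 'a)"
proof (induction m rule: less_induct)
  case (less m)
  define Ev :: "nat \<Rightarrow> nat \<Rightarrow> 'a" where "Ev s k = of_nat (card (bounded_seqs \<sigma> s (2 * k)))" for s k
  define Od :: "nat \<Rightarrow> nat \<Rightarrow> 'a" where "Od s k = of_nat (card (bounded_seqs \<sigma> s (Suc (2 * k))))" for s k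
  define D1 where "D1 k = (\<Sum>s | s < m \<and> flat_admissible \<sigma> s m 1. Ev s k)" for k
  define D0 where "D0 k = (\<Sum>s | s < m \<and> flat_admissible \<sigma> s m 0. Od s k)" for k
  have last_split: "{s. s \<le> m \<and> flat_admissible \<sigma> s m v} =
      insert m {s. s < m \<and> flat_admissible \<sigma> s m (v mod 2)}" for v
    using flat_admissible_self flat_admissible_mod_2 by (auto simp: order.order_iff_strict)
  have Od_eq: "Od m k = Ev m k + D1 k" for k
    unfolding Od_def Ev_def D1_def card_bounded_seqs_Suc of_nat_sum by (subst last_split) simp
  have Ev_Suc_eq: "Ev m (Suc k) = Od m k + D0 k" for k
    unfolding Od_def Ev_def D0_def mult_Suc_right add_2_eq_Suc card_bounded_seqs_Suc of_nat_sum
    by (subst last_split) simp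
  have "polynomial_seq (Ev s)" "polynomial_seq (Od s)" if "s < m" for s
    using less.IH[OF that] unfolding Ev_def Od_def by auto
  then have D: "polynomial_seq D1" "polynomial_seq D0"
    unfolding D1_def D0_def by (auto intro!: polynomial_seq_sum)
  have "polynomial_seq (\<lambda>k. Ev m (Suc k) - Ev m k)"
    using polynomial_seq_add[OF D] by (simp add: Ev_Suc_eq Od_eq add.commute)
  then have "polynomial_seq (Ev m)"
    by (rule polynomial_seq_of_differences)
  moreover from this have "polynomial_seq (Od m)"
    using polynomial_seq_add[OF _ D(1)] by (simp add: Od_eq[abs_def])
  ultimately show ?case
    unfolding Ev_def Od_def by simp
qed

lemma poly_omegaB_poly: "poly (omegaB_poly n \<pi>) (of_nat k) = of_nat (omegaB n \<pi> k)"
proof -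
  obtain p :: "rat poly" where p: "\<And>k. poly p (of_nat k) = of_nat (omegaB n \<pi> k)"
    using polynomial_seq_card_bounded_seqs[of \<pi> n]
    unfolding polynomial_seq_def omegaB_def enriched_seqs_eq_bounded_seqs by blast
  have "omegaB_poly n \<pi> = p"
    unfolding omegaB_poly_def
  proof (rule the_equality)
    show "\<forall>k. poly p (of_nat k) = of_nat (omegaB n \<pi> k)"
      using p by simp
    show "q = p" if "\<forall>k. poly q (of_nat k) = of_nat (omegaB n \<pi> k)" for q
      using that p by (intro poly_eq_if_agree_on_nat) simp
  qed
  then show ?thesis
    using p by simp
qed

section \<open>Sorting permutations\<close>

lemma map_sorting_perm_eq_sorted_list:
  fixes K :: "'a::linorder \<Rightarrow> 'b::linorder"
  assumes "finite A" "inj_on K A" "\<pi> permutes A" "strict_mono_on A (K \<circ> \<pi>)"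
  shows "map (K \<circ> \<pi>) (sorted_list_of_set A) = sorted_list_of_set (K ` A)"
proof -
  let ?xs = "sorted_list_of_set A"
  have "sorted_wrt (<) (map (K \<circ> \<pi>) ?xs)"
    unfolding sorted_wrt_map
    by (rule sorted_wrt_mono_rel[OF _ strict_sorted_list_of_set])
      (use assms(1,4) in \<open>auto simp: strict_mono_on_def\<close>)
  moreover have "set (map (K \<circ> \<pi>) ?xs) = K ` A"
    using assms(1) unfolding set_map set_sorted_list_of_set[OF assms(1)] image_comp[symmetric]
    by (simp only: permutes_image[OF assms(3)])
  moreover have "length (map (K \<circ> \<pi>) ?xs) = card (K ` A)"
    using assms(1,2) by (simp add: card_image)
  ultimately have "sorted_list_of_set (K ` A) = map (K \<circ> \<pi>) ?xs"
    by (intro sorted_list_of_set_unique[THEN iffD1]) (simp_all add: assms(1))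
  then show ?thesis
    by simp
qed

lemma sorting_perm_unique:
  fixes K :: "'a::linorder \<Rightarrow> 'b::linorder"
  assumes A: "finite A" "inj_on K A"
    and "\<pi>1 permutes A" "strict_mono_on A (K \<circ> \<pi>1)"
    and "\<pi>2 permutes A" "strict_mono_on A (K \<circ> \<pi>2)"
  shows "\<pi>1 = \<pi>2"
proof
  fix p
  show "\<pi>1 p = \<pi>2 p"
  proof (cases "p \<in> A")
    case True
    let ?xs = "sorted_list_of_set A"
    have "p \<in> set ?xs"
      using True A(1) by simp
    then obtain i where i: "i < length ?xs" "?xs ! i = p"
      by (auto simp: in_set_conv_nth)
    have "map (K \<circ> \<pi>1) ?xs = map (K \<circ> \<pi>2) ?xs"
      using map_sorting_perm_eq_sorted_list[OF A] assms(3-6) by simp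
    then have "K (\<pi>1 p) = K (\<pi>2 p)"
      using arg_cong[where f = "\<lambda>ys. ys ! i"] i by fastforce
    moreover have "\<pi>1 p \<in> A" "\<pi>2 p \<in> A"
      using True assms(3,5) by (simp_all add: permutes_in_image)
    ultimately show ?thesis
      using A(2) by (meson inj_onD)
  next
    case False
    then show ?thesis
      using assms(3,5) by (simp add: permutes_not_in)
  qed
qed

lemma sorting_perm_exists:
  fixes K :: "'a::linorder \<Rightarrow> 'b::linorder"
  assumes A: "finite A" "inj_on K A"
  obtains \<pi> where "\<pi> permutes A" "strict_mono_on A (K \<circ> \<pi>)"
proof -
  let ?xs = "sorted_list_of_set A" and ?ys = "sorted_list_of_set (K ` A)"
  let ?I = "{..<card A}"
  have len: "length ?xs = card A" "length ?ys = card A"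
    using A by (simp_all add: card_image)
  have xs: "bij_betw ((!) ?xs) ?I A" and ys: "bij_betw ((!) ?ys) ?I (K ` A)"
    using A len by (auto intro!: bij_betw_nth)
  define \<pi>0 where "\<pi>0 = the_inv_into A K \<circ> (!) ?ys \<circ> inv_into ?I ((!) ?xs)"
  define \<pi> where "\<pi> p = (if p \<in> A then \<pi>0 p else p)" for p
  have "bij_betw (the_inv_into A K) (K ` A) A"
    using A(2) by (simp add: bij_betw_the_inv_into bij_betw_imageI)
  then have "bij_betw \<pi>0 A A"
    unfolding \<pi>0_def by (intro bij_betw_trans[OF bij_betw_inv_into[OF xs]] bij_betw_trans[OF ys])
  then have "bij_betw \<pi> A A"
    using bij_betw_cong[of A \<pi> \<pi>0 A] by (simp add: \<pi>_def)
  then have "\<pi> permutes A"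
    by (rule bij_imp_permutes) (simp add: \<pi>_def)
  moreover have K\<pi>: "K (\<pi> (?xs ! i)) = ?ys ! i" if "i < card A" for i
  proof -
    have "?xs ! i \<in> A" "?ys ! i \<in> K ` A"
      using that xs ys by (auto dest: bij_betwE)
    moreover have "inv_into ?I ((!) ?xs) (?xs ! i) = i"
      using that xs by (simp add: bij_betw_def inv_into_f_f)
    ultimately show ?thesis
      unfolding \<pi>_def \<pi>0_def using A(2) by (simp add: f_the_inv_into_f)
  qed
  have "strict_mono_on A (K \<circ> \<pi>)"
  proof (rule strict_mono_onI)
    fix p q
    assume "p \<in> A" "q \<in> A" "p < q"
    then have "p \<in> (!) ?xs ` ?I" "q \<in> (!) ?xs ` ?I"
      using xs by (simp_all add: bij_betw_def)
    then obtain i j where ij: "i < card A" "j < card A" "p = ?xs ! i" "q = ?xs ! j"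
      by auto
    have "i < j"
    proof (rule ccontr)
      assume "\<not> i < j"
      then have "?xs ! j \<le> ?xs ! i"
        using ij len sorted_nth_mono[OF sorted_sorted_list_of_set, of j i A] by simp
      then show False
        using \<open>p < q\<close> ij by simp
    qed
    then have "?ys ! i < ?ys ! j"
      using ij len by (intro sorted_wrt_nth_less[OF strict_sorted_list_of_set]) simp_all
    then show "(K \<circ> \<pi>) p < (K \<circ> \<pi>) q"
      using ij K\<pi> by simp
  qed
  ultimately show ?thesis
    using that by blast
qed

lemma strict_mono_on_int_interval:
  fixes f :: "int \<Rightarrow> 'a::order"
  assumes step: "\<And>p. a \<le> p \<Longrightarrow> p < b \<Longrightarrow> f p < f (p + 1)"
  shows "strict_mono_on {a..b} f"
proof (rule strict_mono_onI)
  fix p q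
  assume "p \<in> {a..b}" "q \<in> {a..b}" "p < q"
  then have "a \<le> p" "p < q" "q \<le> b"
    by auto
  from \<open>p < q\<close> \<open>q \<le> b\<close> show "f p < f q"
  proof (induction q rule: int_gr_induct)
    case base
    then show ?case
      using step \<open>a \<le> p\<close> by simp
  next
    case (step q)
    then show ?case
      using assms[of q] \<open>a \<le> p\<close> by (auto intro: less_trans)
  qed
qed

section \<open>Signed permutations and odd functions\<close>

abbreviation sym_ivl :: "nat \<Rightarrow> int set" where
  "sym_ivl n \<equiv> {- int n .. int n}"

lemma signed_perms_permutes: "\<sigma> \<in> signed_perms n \<Longrightarrow> \<sigma> permutes sym_ivl n"
  unfolding signed_perms_def by simp

lemma signed_perms_neg: "\<sigma> \<in> signed_perms n \<Longrightarrow> \<sigma> (- i) = - \<sigma> i"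
  unfolding signed_perms_def by simp

lemma signed_perms_zero: "\<sigma> \<in> signed_perms n \<Longrightarrow> \<sigma> 0 = 0"
  using signed_perms_neg[of \<sigma> n 0] by simp

lemma signed_perms_in: "\<sigma> \<in> signed_perms n \<Longrightarrow> p \<in> sym_ivl n \<Longrightarrow> \<sigma> p \<in> sym_ivl n"
  using permutes_in_image[OF signed_perms_permutes] by blast

lemma signed_perms_eq_iff: "\<sigma> \<in> signed_perms n \<Longrightarrow> \<sigma> p = \<sigma> q \<longleftrightarrow> p = q"
  using permutes_inj[OF signed_perms_permutes] by (auto dest: injD)

lemma signed_perms_inv_apply: "\<sigma> \<in> signed_perms n \<Longrightarrow> \<sigma> (inv \<sigma> v) = v"
  by (rule permutes_inverses(1)[OF signed_perms_permutes])

lemma signed_perms_apply_inv: "\<sigma> \<in> signed_perms n \<Longrightarrow> inv \<sigma> (\<sigma> v) = v"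
  by (rule permutes_inverses(2)[OF signed_perms_permutes])

lemma signed_perms_compose: "\<pi> \<in> signed_perms n \<Longrightarrow> \<tau> \<in> signed_perms n \<Longrightarrow> \<pi> \<circ> \<tau> \<in> signed_perms n"
  unfolding signed_perms_def by (simp add: permutes_compose)

lemma signed_perms_inv:
  assumes "\<pi> \<in> signed_perms n"
  shows "inv \<pi> \<in> signed_perms n"
proof -
  have "inv \<pi> (- i) = - inv \<pi> i" for i
    using signed_perms_neg[OF assms, of "inv \<pi> i"] signed_perms_inv_apply[OF assms]
      signed_perms_apply_inv[OF assms] by metis
  then show ?thesis
    using permutes_inv[OF signed_perms_permutes[OF assms]] unfolding signed_perms_def by simp
qed

lemma finite_signed_perms: "finite (signed_perms n)"
  by (rule finite_subset[of _ "{p. p permutes sym_ivl n}"])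
    (auto simp: signed_perms_def finite_permutations)

text \<open>An enriched P-partition \<open>a\<close> of \<open>\<sigma>\<close> is encoded by the odd function \<open>g\<close> with
  \<open>g (\<sigma> s) = a s\<close>, whose values lie in \<open>{-2k..2k}\<close>.\<close>

definition odd_funs :: "nat \<Rightarrow> nat \<Rightarrow> (int \<Rightarrow> int) set" where
  "odd_funs n k = {g \<in> sym_ivl n \<rightarrow>\<^sub>E {- (2 * int k) .. 2 * int k}. \<forall>v\<in>sym_ivl n. g (- v) = - g v}"

lemma odd_funs_bound:
  assumes "g \<in> odd_funs n k" "v \<in> sym_ivl n"
  shows "\<bar>g v\<bar> \<le> 2 * int k"
proof -
  have "g v \<in> {- (2 * int k) .. 2 * int k}"
    using assms unfolding odd_funs_def by (blast intro: PiE_mem)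
  then show ?thesis
    by (simp add: abs_le_iff)
qed

lemma odd_funs_neg: "g \<in> odd_funs n k \<Longrightarrow> v \<in> sym_ivl n \<Longrightarrow> g (- v) = - g v"
  unfolding odd_funs_def by auto

lemma odd_funs_zero: "g \<in> odd_funs n k \<Longrightarrow> g 0 = 0"
  using odd_funs_neg[of g n k 0] by simp

lemma odd_funs_undefined: "g \<in> odd_funs n k \<Longrightarrow> v \<notin> sym_ivl n \<Longrightarrow> g v = undefined"
  unfolding odd_funs_def by (blast intro: PiE_arb)

lemma odd_funsI:
  assumes "\<And>v. v \<in> sym_ivl n \<Longrightarrow> \<bar>g v\<bar> \<le> 2 * int k"
    and "\<And>v. v \<in> sym_ivl n \<Longrightarrow> g (- v) = - g v"
    and "\<And>v. v \<notin> sym_ivl n \<Longrightarrow> g v = undefined"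
  shows "g \<in> odd_funs n k"
proof -
  have "g v \<in> {- (2 * int k) .. 2 * int k}" if "v \<in> sym_ivl n" for v
    using assms(1)[OF that] by (simp add: abs_le_iff)
  then have "g \<in> sym_ivl n \<rightarrow>\<^sub>E {- (2 * int k) .. 2 * int k}"
    using assms(3) by (intro PiE_I)
  then show ?thesis
    unfolding odd_funs_def using assms(2) by blast
qed

lemma finite_odd_funs: "finite (odd_funs n k)"
  by (rule finite_subset[of _ "sym_ivl n \<rightarrow>\<^sub>E {- (2 * int k) .. 2 * int k}"])
    (auto simp: odd_funs_def finite_PiE)

definition twisted_lex_less :: "int \<Rightarrow> int \<Rightarrow> int \<Rightarrow> int \<Rightarrow> bool" where
  "twisted_lex_less x u y v \<longleftrightarrow> x < y \<or> (x = y \<and> (if even x then u < v else v < u))"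

text \<open>For \<open>\<bar>u\<bar> \<le> N\<close>, the integer \<open>twisted_pair N x u\<close> is the number with digits \<open>x\<close> and
  \<open>\<plusminus>u\<close> in the balanced base \<open>2 N + 1\<close>; it realises \<open>twisted_lex_less\<close> as the usual order.\<close>

definition twisted_pair :: "int \<Rightarrow> int \<Rightarrow> int \<Rightarrow> int" where
  "twisted_pair N x u = x * (2 * N + 1) + (if even x then u else - u)"

lemma twisted_pair_less_iff:
  assumes "\<bar>u\<bar> \<le> N" "\<bar>v\<bar> \<le> N"
  shows "twisted_pair N x u < twisted_pair N y v \<longleftrightarrow> twisted_lex_less x u y v"
proof (cases x y rule: linorder_cases)
  case less
  then have "x * (2 * N + 1) + (2 * N + 1) \<le> y * (2 * N + 1)"
    using mult_right_mono[of "x + 1" y "2 * N + 1"] assms by (simp add: distrib_right)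
  then show ?thesis
    using less assms unfolding twisted_pair_def twisted_lex_less_def by (auto split: if_splits)
next
  case greater
  then have "y * (2 * N + 1) + (2 * N + 1) \<le> x * (2 * N + 1)"
    using mult_right_mono[of "y + 1" x "2 * N + 1"] assms by (simp add: distrib_right)
  then show ?thesis
    using greater assms unfolding twisted_pair_def twisted_lex_less_def by (auto split: if_splits)
qed (auto simp: twisted_pair_def twisted_lex_less_def)

lemma twisted_pair_eq_iff:
  assumes "\<bar>u\<bar> \<le> N" "\<bar>v\<bar> \<le> N"
  shows "twisted_pair N x u = twisted_pair N y v \<longleftrightarrow> x = y \<and> u = v"
proof
  assume "twisted_pair N x u = twisted_pair N y v"
  then have "\<not> twisted_lex_less x u y v" "\<not> twisted_lex_less y v x u"
    using twisted_pair_less_iff[OF assms, of x y] twisted_pair_less_iff[OF assms(2,1), of y x] by auto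
  then show "x = y \<and> u = v"
    unfolding twisted_lex_less_def by (auto split: if_splits)
qed simp

lemma twisted_pair_neg: "twisted_pair N (- x) (- u) = - twisted_pair N x u"
  unfolding twisted_pair_def by simp

definition sort_key :: "nat \<Rightarrow> (int \<Rightarrow> int) \<Rightarrow> int \<Rightarrow> int" where
  "sort_key n g v = twisted_pair (int n) (g v) v"

lemma sort_key_less_iff:
  "u \<in> sym_ivl n \<Longrightarrow> v \<in> sym_ivl n \<Longrightarrow> sort_key n g u < sort_key n g v \<longleftrightarrow> twisted_lex_less (g u) u (g v) v"
  unfolding sort_key_def by (rule twisted_pair_less_iff) auto

lemma sort_key_neg: "g \<in> odd_funs n k \<Longrightarrow> v \<in> sym_ivl n \<Longrightarrow> sort_key n g (- v) = - sort_key n g v"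
  unfolding sort_key_def using odd_funs_neg[of g n k v] by (simp add: twisted_pair_neg)

lemma inj_on_sort_key: "inj_on (sort_key n g) (sym_ivl n)"
  unfolding sort_key_def by (rule inj_onI) (simp add: twisted_pair_eq_iff abs_le_iff)

definition sorts :: "nat \<Rightarrow> (int \<Rightarrow> int) \<Rightarrow> (int \<Rightarrow> int) \<Rightarrow> bool" where
  "sorts n \<pi> g \<longleftrightarrow> strict_mono_on (sym_ivl n) (sort_key n g \<circ> \<pi>)"

lemma sorts_iff_twisted_lex_less:
  assumes "\<pi> \<in> signed_perms n"
  shows "sorts n \<pi> g \<longleftrightarrow>
    (\<forall>p\<in>sym_ivl n. \<forall>q\<in>sym_ivl n. p < q \<longrightarrow> twisted_lex_less (g (\<pi> p)) (\<pi> p) (g (\<pi> q)) (\<pi> q))"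
proof -
  have "sort_key n g (\<pi> p) < sort_key n g (\<pi> q) \<longleftrightarrow> twisted_lex_less (g (\<pi> p)) (\<pi> p) (g (\<pi> q)) (\<pi> q)"
    if "p \<in> sym_ivl n" "q \<in> sym_ivl n" for p q
    using that by (intro sort_key_less_iff signed_perms_in[OF assms])
  then show ?thesis
    unfolding sorts_def strict_mono_on_def by (metis comp_apply)
qed

lemma sorts_reflect:
  assumes g: "g \<in> odd_funs n k" and \<pi>: "\<pi> permutes sym_ivl n" "sorts n \<pi> g"
  shows "(\<lambda>p. - \<pi> (- p)) permutes sym_ivl n" "sorts n (\<lambda>p. - \<pi> (- p)) g"
proof -
  have in_ivl: "\<pi> (- p) \<in> sym_ivl n" if "p \<in> sym_ivl n" for p
    using that permutes_in_image[OF \<pi>(1), of "- p"] by simp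
  have "inj_on (\<lambda>p. - \<pi> (- p)) (sym_ivl n)"
    by (auto simp: inj_on_def dest!: injD[OF permutes_inj[OF \<pi>(1)]])
  then show "(\<lambda>p. - \<pi> (- p)) permutes sym_ivl n"
  proof (rule inj_imp_permutes)
    fix p
    show "p \<in> sym_ivl n \<Longrightarrow> - \<pi> (- p) \<in> sym_ivl n"
      using in_ivl[of p] by auto
    show "p \<notin> sym_ivl n \<Longrightarrow> - \<pi> (- p) = p"
      using permutes_not_in[OF \<pi>(1), of "- p"] by auto
  qed simp
  show "sorts n (\<lambda>p. - \<pi> (- p)) g"
    unfolding sorts_def
  proof (rule strict_mono_onI)
    fix p q
    assume pq: "p \<in> sym_ivl n" "q \<in> sym_ivl n" "p < q"
    then have "sort_key n g (\<pi> (- q)) < sort_key n g (\<pi> (- p))"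
      using \<pi>(2) unfolding sorts_def strict_mono_on_def by auto
    then show "(sort_key n g \<circ> (\<lambda>p. - \<pi> (- p))) p < (sort_key n g \<circ> (\<lambda>p. - \<pi> (- p))) q"
      using sort_key_neg[OF g in_ivl] pq by simp
  qed
qed

definition sorting_perm :: "nat \<Rightarrow> (int \<Rightarrow> int) \<Rightarrow> int \<Rightarrow> int" where
  "sorting_perm n g = (THE \<pi>. \<pi> \<in> signed_perms n \<and> sorts n \<pi> g)"

lemma ex1_sorting_perm:
  assumes g: "g \<in> odd_funs n k"
  shows "\<exists>!\<pi>. \<pi> \<in> signed_perms n \<and> sorts n \<pi> g"
proof -
  have unique: "\<pi>1 = \<pi>2"
    if "\<pi>1 permutes sym_ivl n" "sorts n \<pi>1 g" "\<pi>2 permutes sym_ivl n" "sorts n \<pi>2 g" for \<pi>1 \<pi>2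
    by (rule sorting_perm_unique[OF _ inj_on_sort_key]) (use that in \<open>simp_all add: sorts_def\<close>)
  obtain \<pi> where \<pi>: "\<pi> permutes sym_ivl n" "sorts n \<pi> g"
    using sorting_perm_exists[OF _ inj_on_sort_key] unfolding sorts_def by blast
  \<comment> \<open>as \<open>g\<close> is odd, the reflection of a sorting permutation sorts \<open>g\<close> too\<close>
  have "(\<lambda>p. - \<pi> (- p)) = \<pi>"
    by (rule unique[OF sorts_reflect[OF g \<pi>] \<pi>])
  then have "\<pi> (- i) = - \<pi> i" for i
    using fun_cong[of _ _ "- i"] by (metis minus_minus)
  then have "\<pi> \<in> signed_perms n"
    using \<pi>(1) unfolding signed_perms_def by simp
  then show ?thesis
    using \<pi> unique signed_perms_permutes by blast
qed

lemma sorting_perm_in_signed_perms: "g \<in> odd_funs n k \<Longrightarrow> sorting_perm n g \<in> signed_perms n"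
  using theI'[OF ex1_sorting_perm] unfolding sorting_perm_def by blast

lemma sorts_sorting_perm: "g \<in> odd_funs n k \<Longrightarrow> sorts n (sorting_perm n g) g"
  using theI'[OF ex1_sorting_perm] unfolding sorting_perm_def by blast

lemma sorting_perm_eqI:
  assumes "g \<in> odd_funs n k" "\<pi> \<in> signed_perms n" "sorts n \<pi> g"
  shows "sorting_perm n g = \<pi>"
  unfolding sorting_perm_def
  by (rule the1_equality[OF ex1_sorting_perm[OF assms(1)]]) (simp add: assms(2,3))

section \<open>Enriched P-partitions as odd functions\<close>

lemma sorts_iff_steps:
  assumes \<sigma>: "\<sigma> \<in> signed_perms n" and g: "g \<in> odd_funs n k"
  shows "sorts n \<sigma> g \<longleftrightarrow>
    (\<forall>s<n. twisted_lex_less (g (\<sigma> (int s))) (\<sigma> (int s)) (g (\<sigma> (int (Suc s)))) (\<sigma> (int (Suc s))))"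
    (is "_ \<longleftrightarrow> (\<forall>s<n. ?step s)")
proof
  assume "sorts n \<sigma> g"
  then show "\<forall>s<n. ?step s"
    unfolding sorts_iff_twisted_lex_less[OF \<sigma>] by auto
next
  assume steps: "\<forall>s<n. ?step s"
  define key where "key = sort_key n g \<circ> \<sigma>"
  have key_neg: "key (- p) = - key p" if "p \<in> sym_ivl n" for p
    unfolding key_def using signed_perms_neg[OF \<sigma>] sort_key_neg[OF g signed_perms_in[OF \<sigma> that]] by simp
  have key_step: "key (int s) < key (int s + 1)" if "s < n" for s
    using steps that sort_key_less_iff[of "\<sigma> (int s)" n "\<sigma> (int (Suc s))" g] signed_perms_in[OF \<sigma>]
    unfolding key_def by (simp add: add.commute)
  have "key p < key (p + 1)" if "- int n \<le> p" "p < int n" for p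
  proof (cases "0 \<le> p")
    case True
    then show ?thesis
      using key_step[of "nat p"] that by simp
  next
    case False
    \<comment> \<open>by oddness, the step from \<open>p\<close> to \<open>p + 1\<close> mirrors the step from \<open>- p - 1\<close> to \<open>- p\<close>\<close>
    have "key (int (nat (- p - 1))) < key (int (nat (- p - 1)) + 1)"
      using key_step[of "nat (- p - 1)"] that by linarith
    then have "key (- p - 1) < key (- p)"
      using False by simp
    moreover have "key p = - key (- p)" "key (p + 1) = - key (- p - 1)"
      using key_neg[of "- p"] key_neg[of "- p - 1"] that False by (auto simp: add.commute)
    ultimately show ?thesis
      using False by simp
  qed
  then show "sorts n \<sigma> g"
    unfolding sorts_def key_def[symmetric] by (rule strict_mono_on_int_interval)
qed

lemma admissible_step_iff_twisted_lex_less: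
  "\<sigma> (int s) \<noteq> \<sigma> (int (Suc s)) \<Longrightarrow>
   admissible_step \<sigma> s x y \<longleftrightarrow> twisted_lex_less (int x) (\<sigma> (int s)) (int y) (\<sigma> (int (Suc s)))"
  unfolding admissible_step_def twisted_lex_less_def by (cases "even x") auto

lemma sorted_odd_fun_nonneg:
  assumes \<sigma>: "\<sigma> \<in> signed_perms n" and g: "g \<in> odd_funs n k" "sorts n \<sigma> g" and "s \<le> n"
  shows "0 \<le> g (\<sigma> (int s))"
proof (cases "s = 0")
  case False
  then have "twisted_lex_less (g (\<sigma> 0)) (\<sigma> 0) (g (\<sigma> (int s))) (\<sigma> (int s))"
    using g(2) \<open>s \<le> n\<close> unfolding sorts_iff_twisted_lex_less[OF \<sigma>] by auto
  then show ?thesis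
    using signed_perms_zero[OF \<sigma>] odd_funs_zero[OF g(1)] unfolding twisted_lex_less_def by auto
qed (simp add: signed_perms_zero[OF \<sigma>] odd_funs_zero[OF g(1)])

definition seq_of_odd_fun :: "nat \<Rightarrow> (int \<Rightarrow> int) \<Rightarrow> (int \<Rightarrow> int) \<Rightarrow> nat \<Rightarrow> nat" where
  "seq_of_odd_fun n \<sigma> g = restrict (\<lambda>s. nat (g (\<sigma> (int s)))) {0..n}"

definition odd_fun_of_seq :: "nat \<Rightarrow> (int \<Rightarrow> int) \<Rightarrow> (nat \<Rightarrow> nat) \<Rightarrow> int \<Rightarrow> int" where
  "odd_fun_of_seq n \<sigma> a = restrict (\<lambda>v. sgn (inv \<sigma> v) * int (a (nat \<bar>inv \<sigma> v\<bar>))) (sym_ivl n)"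

lemma odd_fun_of_seq_apply:
  "\<sigma> \<in> signed_perms n \<Longrightarrow> p \<in> sym_ivl n \<Longrightarrow> odd_fun_of_seq n \<sigma> a (\<sigma> p) = sgn p * int (a (nat \<bar>p\<bar>))"
  unfolding odd_fun_of_seq_def using signed_perms_in[of \<sigma> n p] by (simp add: signed_perms_apply_inv)

lemma odd_fun_of_seq_apply_nat:
  "\<sigma> \<in> signed_perms n \<Longrightarrow> a 0 = 0 \<Longrightarrow> s \<le> n \<Longrightarrow> odd_fun_of_seq n \<sigma> a (\<sigma> (int s)) = int (a s)"
  by (cases "s = 0") (simp_all add: odd_fun_of_seq_apply)

lemma seq_of_odd_fun_in_bounded_seqs:
  assumes \<sigma>: "\<sigma> \<in> signed_perms n" and g: "g \<in> odd_funs n k" "sorts n \<sigma> g"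
  shows "seq_of_odd_fun n \<sigma> g \<in> bounded_seqs \<sigma> n (2 * k)"
proof -
  let ?a = "seq_of_odd_fun n \<sigma> g"
  have a: "int (?a s) = g (\<sigma> (int s))" if "s \<le> n" for s
    using sorted_odd_fun_nonneg[OF \<sigma> g that] that unfolding seq_of_odd_fun_def by simp
  have "?a s \<le> 2 * k" if "s \<le> n" for s
    using a[OF that] odd_funs_bound[OF g(1) signed_perms_in[OF \<sigma>, of "int s"]] that by simp
  then have "?a \<in> {0..n} \<rightarrow>\<^sub>E {0..2 * k}"
    unfolding seq_of_odd_fun_def by auto
  moreover have "?a 0 = 0"
    using a[of 0] signed_perms_zero[OF \<sigma>] odd_funs_zero[OF g(1)] by simp
  moreover have "admissible_step \<sigma> s (?a s) (?a (Suc s))" if "s < n" for s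
    using g(2) that a[of s] a[of "Suc s"] signed_perms_eq_iff[OF \<sigma>, of "int s" "int (Suc s)"]
    unfolding sorts_iff_steps[OF \<sigma> g(1)] by (simp add: admissible_step_iff_twisted_lex_less)
  ultimately show ?thesis
    unfolding bounded_seqs_def by blast
qed

lemma odd_fun_of_seq_sorted:
  assumes \<sigma>: "\<sigma> \<in> signed_perms n" and a: "a \<in> bounded_seqs \<sigma> n (2 * k)"
  shows "odd_fun_of_seq n \<sigma> a \<in> odd_funs n k" "sorts n \<sigma> (odd_fun_of_seq n \<sigma> a)"
proof -
  let ?g = "odd_fun_of_seq n \<sigma> a"
  have a_le: "a s \<le> 2 * k" if "s \<le> n" for s
    using a that unfolding bounded_seqs_def by auto
  have a0: "a 0 = 0"
    using a unfolding bounded_seqs_def by simp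
  have inv_in: "inv \<sigma> v \<in> sym_ivl n" if "v \<in> sym_ivl n" for v
    using signed_perms_in[OF signed_perms_inv[OF \<sigma>] that] .
  show g: "?g \<in> odd_funs n k"
  proof (rule odd_funsI)
    fix v
    assume v: "v \<in> sym_ivl n"
    have "nat \<bar>inv \<sigma> v\<bar> \<le> n"
      using inv_in[OF v] by auto
    then show "\<bar>?g v\<bar> \<le> 2 * int k"
      using a_le[of "nat \<bar>inv \<sigma> v\<bar>"] v
      unfolding odd_fun_of_seq_def by (auto simp: abs_mult abs_sgn_eq)
    show "?g (- v) = - ?g v"
      using v signed_perms_neg[OF signed_perms_inv[OF \<sigma>], of v] unfolding odd_fun_of_seq_def by simp
  qed (auto simp: odd_fun_of_seq_def)
  have "twisted_lex_less (?g (\<sigma> (int s))) (\<sigma> (int s)) (?g (\<sigma> (int (Suc s)))) (\<sigma> (int (Suc s)))"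
    if "s < n" for s
  proof -
    have "\<sigma> (int s) \<noteq> \<sigma> (int (Suc s))"
      using signed_perms_eq_iff[OF \<sigma>] by simp
    moreover have "admissible_step \<sigma> s (a s) (a (Suc s))"
      using a that unfolding bounded_seqs_def by auto
    ultimately have "twisted_lex_less (int (a s)) (\<sigma> (int s)) (int (a (Suc s))) (\<sigma> (int (Suc s)))"
      by (simp add: admissible_step_iff_twisted_lex_less)
    then show ?thesis
      using that odd_fun_of_seq_apply_nat[of \<sigma> n a s, OF \<sigma> a0]
        odd_fun_of_seq_apply_nat[of \<sigma> n a "Suc s", OF \<sigma> a0] by simp
  qed
  then show "sorts n \<sigma> ?g"
    unfolding sorts_iff_steps[OF \<sigma> g] by blast
qed

lemma odd_fun_of_seq_of_odd_fun:
  assumes \<sigma>: "\<sigma> \<in> signed_perms n" and g: "g \<in> odd_funs n k" "sorts n \<sigma> g"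
  shows "odd_fun_of_seq n \<sigma> (seq_of_odd_fun n \<sigma> g) = g"
proof
  fix v
  show "odd_fun_of_seq n \<sigma> (seq_of_odd_fun n \<sigma> g) v = g v"
  proof (cases "v \<in> sym_ivl n")
    case True
    define p where "p = inv \<sigma> v"
    have p: "p \<in> sym_ivl n" "\<sigma> p = v"
      unfolding p_def using signed_perms_in[OF signed_perms_inv[OF \<sigma>] True]
        signed_perms_inv_apply[OF \<sigma>] by auto
    have "nat \<bar>p\<bar> \<le> n"
      using p(1) by auto
    then have "int (seq_of_odd_fun n \<sigma> g (nat \<bar>p\<bar>)) = g (\<sigma> \<bar>p\<bar>)"
      using sorted_odd_fun_nonneg[OF \<sigma> g, of "nat \<bar>p\<bar>"] unfolding seq_of_odd_fun_def by simp
    moreover have "g (\<sigma> p) = sgn p * g (\<sigma> \<bar>p\<bar>)"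
      using odd_funs_neg[OF g(1) signed_perms_in[OF \<sigma>, of "- p"]] p(1) signed_perms_neg[OF \<sigma>]
        odd_funs_zero[OF g(1)] signed_perms_zero[OF \<sigma>]
      by (cases p "0::int" rule: linorder_cases) (auto simp: abs_if)
    ultimately show ?thesis
      using p odd_fun_of_seq_apply[OF \<sigma> p(1)] by (auto simp: sgn_if)
  next
    case False
    then show ?thesis
      using odd_funs_undefined[OF g(1) False] unfolding odd_fun_of_seq_def by auto
  qed
qed

lemma seq_of_odd_fun_of_seq:
  assumes \<sigma>: "\<sigma> \<in> signed_perms n" and a: "a \<in> bounded_seqs \<sigma> n w"
  shows "seq_of_odd_fun n \<sigma> (odd_fun_of_seq n \<sigma> a) = a"
proof
  fix s
  have a0: "a 0 = 0" and a_ext: "a \<in> {0..n} \<rightarrow>\<^sub>E {0..w}"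
    using a unfolding bounded_seqs_def by auto
  show "seq_of_odd_fun n \<sigma> (odd_fun_of_seq n \<sigma> a) s = a s"
  proof (cases "s \<le> n")
    case True
    then show ?thesis
      unfolding seq_of_odd_fun_def by (simp add: odd_fun_of_seq_apply_nat[of \<sigma> n a, OF \<sigma> a0])
  next
    case False
    have "a s = undefined"
      by (rule PiE_arb[OF a_ext]) (use False in simp)
    then show ?thesis
      using False unfolding seq_of_odd_fun_def by simp
  qed
qed

lemma omegaB_eq_card_sorted_odd_funs:
  assumes \<sigma>: "\<sigma> \<in> signed_perms n"
  shows "omegaB n \<sigma> k = card {g \<in> odd_funs n k. sorts n \<sigma> g}"
proof -
  have "bij_betw (seq_of_odd_fun n \<sigma>) {g \<in> odd_funs n k. sorts n \<sigma> g} (bounded_seqs \<sigma> n (2 * k))"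
  proof (rule bij_betw_byWitness[where f' = "odd_fun_of_seq n \<sigma>"])
    show "\<forall>g\<in>{g \<in> odd_funs n k. sorts n \<sigma> g}. odd_fun_of_seq n \<sigma> (seq_of_odd_fun n \<sigma> g) = g"
      using odd_fun_of_seq_of_odd_fun[OF \<sigma>] by blast
    show "\<forall>a\<in>bounded_seqs \<sigma> n (2 * k). seq_of_odd_fun n \<sigma> (odd_fun_of_seq n \<sigma> a) = a"
      using seq_of_odd_fun_of_seq[OF \<sigma>] by blast
    show "seq_of_odd_fun n \<sigma> ` {g \<in> odd_funs n k. sorts n \<sigma> g} \<subseteq> bounded_seqs \<sigma> n (2 * k)"
      using seq_of_odd_fun_in_bounded_seqs[OF \<sigma>] by blast
    show "odd_fun_of_seq n \<sigma> ` bounded_seqs \<sigma> n (2 * k) \<subseteq> {g \<in> odd_funs n k. sorts n \<sigma> g}"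
      using odd_fun_of_seq_sorted[OF \<sigma>] by blast
  qed
  then show ?thesis
    unfolding omegaB_def enriched_seqs_eq_bounded_seqs by (simp add: bij_betw_same_card)
qed

section \<open>Multiplying enriched P-partitions\<close>

lemma twisted_pair_bound:
  assumes "\<bar>x\<bar> \<le> M" "\<bar>u\<bar> \<le> N"
  shows "\<bar>twisted_pair N x u\<bar> \<le> M * (2 * N + 1) + N"
proof -
  have "\<bar>x * (2 * N + 1)\<bar> \<le> M * (2 * N + 1)"
    using assms by (simp add: abs_mult mult_right_mono)
  moreover have "\<bar>if even x then u else - u\<bar> \<le> N"
    using assms(2) by simp
  ultimately show ?thesis
    unfolding twisted_pair_def using abs_triangle_ineq[of "x * (2 * N + 1)" "if even x then u else - u"]
    by linarith
qed

lemma twisted_pair_surj: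
  assumes "0 \<le> N" "\<bar>F\<bar> \<le> M * (2 * N + 1) + N"
  obtains x u where "\<bar>x\<bar> \<le> M" "\<bar>u\<bar> \<le> N" "twisted_pair N x u = F"
proof -
  define B where "B = 2 * N + 1"
  define x where "x = (F + N) div B"
  define r where "r = (F + N) mod B"
  have B: "0 < B"
    using assms(1) unfolding B_def by simp
  have F: "F + N = x * B + r"
    unfolding x_def r_def by simp
  have r: "0 \<le> r" "r < B"
    unfolding r_def using B by simp_all
  have "x \<le> M"
  proof (rule ccontr)
    assume "\<not> x \<le> M"
    then have "(M + 1) * B \<le> x * B"
      using B by (intro mult_right_mono) auto
    then show False
      using assms(2) F r unfolding B_def by (simp add: distrib_right abs_le_iff)
  qed
  moreover have "- M \<le> x"
  proof (rule ccontr)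
    assume "\<not> - M \<le> x"
    then have "(x + 1) * B \<le> - M * B"
      using B by (intro mult_right_mono) auto
    then show False
      using assms(2) F r unfolding B_def by (simp add: distrib_right abs_le_iff)
  qed
  moreover have "twisted_pair N x (if even x then r - N else N - r) = F"
    using F unfolding twisted_pair_def B_def by simp
  moreover have "\<bar>if even x then r - N else N - r\<bar> \<le> N"
    using r unfolding B_def by auto
  ultimately show ?thesis
    using that[of x "if even x then r - N else N - r"] by (simp add: abs_le_iff)
qed

lemma even_twisted_pair_iff: "even (twisted_pair N x u) \<longleftrightarrow> even (x + u)"
  unfolding twisted_pair_def by auto

text \<open>In the product below, the high digits carry the order of the second factor and the
  low digits that of the first; ties in the high digit are resolved by the low digit.\<close>

lemma twisted_lex_less_twisted_pair:
  assumes i: "\<bar>i1\<bar> \<le> N" "\<bar>i2\<bar> \<le> N" and "u \<noteq> w"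
    and x: "twisted_lex_less x1 a x2 b"
    and a_less: "a < b \<Longrightarrow> twisted_lex_less i1 u i2 w"
    and b_less: "b < a \<Longrightarrow> twisted_lex_less i2 w i1 u"
  shows "twisted_lex_less (twisted_pair N x1 i1) u (twisted_pair N x2 i2) w"
proof (cases "x1 < x2")
  case True
  then show ?thesis
    using twisted_pair_less_iff[OF i] unfolding twisted_lex_less_def by auto
next
  case False
  then have x12: "x1 = x2" and ab: "if even x1 then a < b else b < a"
    using x unfolding twisted_lex_less_def by auto
  show ?thesis
  proof (cases "i1 = i2")
    case False
    then have "twisted_lex_less x1 i1 x2 i2"
      using x12 ab a_less b_less unfolding twisted_lex_less_def by (auto split: if_splits)
    then show ?thesis
      using twisted_pair_less_iff[OF i] unfolding twisted_lex_less_def by auto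
  next
    case True
    then have "if even (x1 + i1) then u < w else w < u"
      using x12 ab a_less b_less \<open>u \<noteq> w\<close> unfolding twisted_lex_less_def by (auto split: if_splits)
    then show ?thesis
      using x12 True unfolding twisted_lex_less_def even_twisted_pair_iff by simp
  qed
qed

text \<open>With \<open>\<pi>\<close> the sorting permutation of \<open>g\<close>, the value at \<open>\<pi> p\<close> has high digit \<open>h p\<close> and
  low digit \<open>g (\<pi> p)\<close>; the bounds combine as \<open>(4 k + 1) (4 l + 1) = 4 (4 k l + k + l) + 1\<close>.\<close>

definition odd_fun_prod :: "nat \<Rightarrow> nat \<Rightarrow> (int \<Rightarrow> int) \<Rightarrow> (int \<Rightarrow> int) \<Rightarrow> int \<Rightarrow> int" where
  "odd_fun_prod n k g h =
     restrict (\<lambda>v. twisted_pair (2 * int k) (h (inv (sorting_perm n g) v)) (g v)) (sym_ivl n)"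

lemma odd_fun_prod_apply:
  assumes "g \<in> odd_funs n k" "p \<in> sym_ivl n"
  shows "odd_fun_prod n k g h (sorting_perm n g p) = twisted_pair (2 * int k) (h p) (g (sorting_perm n g p))"
  using signed_perms_in[OF sorting_perm_in_signed_perms[OF assms(1)] assms(2)]
  unfolding odd_fun_prod_def by (simp add: signed_perms_apply_inv[OF sorting_perm_in_signed_perms[OF assms(1)]])

lemma odd_fun_prod_in_odd_funs:
  assumes g: "g \<in> odd_funs n k" and h: "h \<in> odd_funs n l"
  shows "odd_fun_prod n k g h \<in> odd_funs n (4 * k * l + k + l)"
proof (rule odd_funsI)
  let ?\<pi> = "sorting_perm n g"
  have \<pi>: "?\<pi> \<in> signed_perms n"
    by (rule sorting_perm_in_signed_perms[OF g])
  fix v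
  assume v: "v \<in> sym_ivl n"
  then have \<pi>v: "inv ?\<pi> v \<in> sym_ivl n"
    by (rule signed_perms_in[OF signed_perms_inv[OF \<pi>]])
  have "\<bar>twisted_pair (2 * int k) (h (inv ?\<pi> v)) (g v)\<bar> \<le> 2 * int l * (2 * (2 * int k) + 1) + 2 * int k"
    by (rule twisted_pair_bound[OF odd_funs_bound[OF h \<pi>v] odd_funs_bound[OF g v]])
  then show "\<bar>odd_fun_prod n k g h v\<bar> \<le> 2 * int (4 * k * l + k + l)"
    using v unfolding odd_fun_prod_def by (simp add: algebra_simps)
  show "odd_fun_prod n k g h (- v) = - odd_fun_prod n k g h v"
    using v odd_funs_neg[OF g v] odd_funs_neg[OF h \<pi>v] signed_perms_neg[OF signed_perms_inv[OF \<pi>]]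
    unfolding odd_fun_prod_def by (simp add: twisted_pair_neg[symmetric])
qed (auto simp: odd_fun_prod_def)

lemma sorting_perm_odd_fun_prod:
  assumes g: "g \<in> odd_funs n k" and h: "h \<in> odd_funs n l"
  shows "sorting_perm n (odd_fun_prod n k g h) = sorting_perm n g \<circ> sorting_perm n h"
proof (rule sorting_perm_eqI[OF odd_fun_prod_in_odd_funs[OF g h]])
  let ?\<pi> = "sorting_perm n g" and ?\<tau> = "sorting_perm n h" and ?f = "odd_fun_prod n k g h"
  have \<pi>: "?\<pi> \<in> signed_perms n" "sorts n ?\<pi> g" and \<tau>: "?\<tau> \<in> signed_perms n" "sorts n ?\<tau> h"
    using sorting_perm_in_signed_perms sorts_sorting_perm g h by auto
  show "?\<pi> \<circ> ?\<tau> \<in> signed_perms n"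
    by (rule signed_perms_compose[OF \<pi>(1) \<tau>(1)])
  show "sorts n (?\<pi> \<circ> ?\<tau>) ?f"
    unfolding sorts_iff_twisted_lex_less[OF signed_perms_compose[OF \<pi>(1) \<tau>(1)]]
  proof (intro ballI impI)
    fix p q
    assume pq: "p \<in> sym_ivl n" "q \<in> sym_ivl n" "p < q"
    define a b where "a = ?\<tau> p" and "b = ?\<tau> q"
    have ab: "a \<in> sym_ivl n" "b \<in> sym_ivl n" "a \<noteq> b"
      using pq signed_perms_in[OF \<tau>(1)] signed_perms_eq_iff[OF \<tau>(1)] unfolding a_def b_def by auto
    have \<pi>ab: "?\<pi> a \<in> sym_ivl n" "?\<pi> b \<in> sym_ivl n" "?\<pi> a \<noteq> ?\<pi> b"
      using ab signed_perms_in[OF \<pi>(1)] signed_perms_eq_iff[OF \<pi>(1)] by auto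
    have "twisted_lex_less (h a) a (h b) b"
      using \<tau>(2) pq unfolding a_def b_def sorts_iff_twisted_lex_less[OF \<tau>(1)] by blast
    moreover have "twisted_lex_less (g (?\<pi> a)) (?\<pi> a) (g (?\<pi> b)) (?\<pi> b)" if "a < b"
      using \<pi>(2) ab that unfolding sorts_iff_twisted_lex_less[OF \<pi>(1)] by blast
    moreover have "twisted_lex_less (g (?\<pi> b)) (?\<pi> b) (g (?\<pi> a)) (?\<pi> a)" if "b < a"
      using \<pi>(2) ab that unfolding sorts_iff_twisted_lex_less[OF \<pi>(1)] by blast
    ultimately have "twisted_lex_less (twisted_pair (2 * int k) (h a) (g (?\<pi> a))) (?\<pi> a)
        (twisted_pair (2 * int k) (h b) (g (?\<pi> b))) (?\<pi> b)"
      by (intro twisted_lex_less_twisted_pair odd_funs_bound[OF g] \<pi>ab)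
    then show "twisted_lex_less (?f ((?\<pi> \<circ> ?\<tau>) p)) ((?\<pi> \<circ> ?\<tau>) p) (?f ((?\<pi> \<circ> ?\<tau>) q)) ((?\<pi> \<circ> ?\<tau>) q)"
      using odd_fun_prod_apply[OF g ab(1)] odd_fun_prod_apply[OF g ab(2)] unfolding a_def b_def by simp
  qed
qed

lemma odd_fun_prod_inj:
  assumes g: "g1 \<in> odd_funs n k" "g2 \<in> odd_funs n k" and h: "h1 \<in> odd_funs n l" "h2 \<in> odd_funs n l"
    and eq: "odd_fun_prod n k g1 h1 = odd_fun_prod n k g2 h2"
  shows "g1 = g2" "h1 = h2"
proof -
  have digits: "h1 (inv (sorting_perm n g1) v) = h2 (inv (sorting_perm n g2) v) \<and> g1 v = g2 v"
    if v: "v \<in> sym_ivl n" for v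
    using fun_cong[OF eq, of v] v odd_funs_bound[OF g(1) v] odd_funs_bound[OF g(2) v]
    unfolding odd_fun_prod_def by (simp add: twisted_pair_eq_iff)
  show "g1 = g2"
    using digits odd_funs_undefined[OF g(1)] odd_funs_undefined[OF g(2)] by fastforce
  then have \<pi>: "sorting_perm n g1 \<in> signed_perms n" "sorting_perm n g2 = sorting_perm n g1"
    using sorting_perm_in_signed_perms[OF g(1)] by simp_all
  show "h1 = h2"
  proof
    fix p
    show "h1 p = h2 p"
      using digits[OF signed_perms_in[OF \<pi>(1)], of p] signed_perms_apply_inv[OF \<pi>(1)] \<pi>(2)
        odd_funs_undefined[OF h(1), of p] odd_funs_undefined[OF h(2), of p]
      by (cases "p \<in> sym_ivl n") simp_all
  qed
qed

lemma odd_fun_prod_surj: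
  assumes f: "f \<in> odd_funs n (4 * k * l + k + l)"
  obtains g h where "g \<in> odd_funs n k" "h \<in> odd_funs n l" "odd_fun_prod n k g h = f"
proof -
  have "\<exists>x u. \<bar>x\<bar> \<le> 2 * int l \<and> \<bar>u\<bar> \<le> 2 * int k \<and> twisted_pair (2 * int k) x u = f v"
    if "v \<in> sym_ivl n" for v
  proof -
    have "\<bar>f v\<bar> \<le> 2 * int l * (2 * (2 * int k) + 1) + 2 * int k"
      using odd_funs_bound[OF f that] by (simp add: algebra_simps)
    then show ?thesis
      by (rule twisted_pair_surj[rotated]) auto
  qed
  then obtain hi lo where digits: "\<And>v. v \<in> sym_ivl n \<Longrightarrow>
      \<bar>hi v\<bar> \<le> 2 * int l \<and> \<bar>lo v\<bar> \<le> 2 * int k \<and> twisted_pair (2 * int k) (hi v) (lo v) = f v"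
    by metis
  have digits_neg: "hi (- v) = - hi v \<and> lo (- v) = - lo v" if v: "v \<in> sym_ivl n" for v
  proof -
    have "twisted_pair (2 * int k) (hi (- v)) (lo (- v)) = twisted_pair (2 * int k) (- hi v) (- lo v)"
      using digits[OF v] digits[of "- v"] v odd_funs_neg[OF f v] by (simp add: twisted_pair_neg)
    moreover have "\<bar>lo (- v)\<bar> \<le> 2 * int k" "\<bar>- lo v\<bar> \<le> 2 * int k"
      using digits[OF v] digits[of "- v"] v by auto
    ultimately show ?thesis
      by (simp add: twisted_pair_eq_iff)
  qed
  define g where "g = restrict lo (sym_ivl n)"
  have g: "g \<in> odd_funs n k"
    by (rule odd_funsI) (use digits digits_neg in \<open>auto simp: g_def\<close>)
  let ?\<pi> = "sorting_perm n g"
  have \<pi>: "?\<pi> \<in> signed_perms n"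
    by (rule sorting_perm_in_signed_perms[OF g])
  define h where "h = restrict (hi \<circ> ?\<pi>) (sym_ivl n)"
  have h: "h \<in> odd_funs n l"
  proof (rule odd_funsI)
    fix p
    assume "p \<in> sym_ivl n"
    then show "\<bar>h p\<bar> \<le> 2 * int l" "h (- p) = - h p"
      using digits[OF signed_perms_in[OF \<pi>]] digits_neg[OF signed_perms_in[OF \<pi>]]
        signed_perms_neg[OF \<pi>] by (simp_all add: h_def)
  qed (auto simp: h_def)
  have "odd_fun_prod n k g h = f"
  proof
    fix v
    show "odd_fun_prod n k g h v = f v"
    proof (cases "v \<in> sym_ivl n")
      case True
      then have "inv ?\<pi> v \<in> sym_ivl n"
        by (rule signed_perms_in[OF signed_perms_inv[OF \<pi>]])
      then show ?thesis
        using True digits[OF True] signed_perms_inv_apply[OF \<pi>]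
        unfolding odd_fun_prod_def g_def h_def by simp
    next
      case False
      then show ?thesis
        using odd_funs_undefined[OF f False] unfolding odd_fun_prod_def by auto
    qed
  qed
  then show ?thesis
    using that g h by blast
qed

definition perm_fibre :: "nat \<Rightarrow> nat \<Rightarrow> (int \<Rightarrow> int) \<Rightarrow> (int \<Rightarrow> int) set" where
  "perm_fibre n k \<pi> = {g \<in> odd_funs n k. sorting_perm n g = \<pi>}"

lemma card_perm_fibre:
  assumes "\<pi> \<in> signed_perms n"
  shows "card (perm_fibre n k \<pi>) = omegaB n \<pi> k"
proof -
  have "perm_fibre n k \<pi> = {g \<in> odd_funs n k. sorts n \<pi> g}"
    unfolding perm_fibre_def using assms sorts_sorting_perm sorting_perm_eqI by blast
  then show ?thesis
    using omegaB_eq_card_sorted_odd_funs[OF assms] by simp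
qed

lemma finite_perm_fibre: "finite (perm_fibre n k \<pi>)"
  unfolding perm_fibre_def using finite_odd_funs by simp

lemma card_pairs_with_perm_product:
  "card {(g, h) \<in> odd_funs n k \<times> odd_funs n l. sorting_perm n g \<circ> sorting_perm n h = \<sigma>} =
     (\<Sum>\<pi>\<in>signed_perms n. \<Sum>\<tau>\<in>signed_perms n. if \<pi> \<circ> \<tau> = \<sigma> then omegaB n \<pi> k * omegaB n \<tau> l else 0)"
proof -
  let ?B = "signed_perms n"
  let ?P = "{i \<in> ?B \<times> ?B. fst i \<circ> snd i = \<sigma>}"
  have "{(g, h) \<in> odd_funs n k \<times> odd_funs n l. sorting_perm n g \<circ> sorting_perm n h = \<sigma>} =
      (\<Union>i\<in>?P. perm_fibre n k (fst i) \<times> perm_fibre n l (snd i))"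
    unfolding perm_fibre_def using sorting_perm_in_signed_perms by fastforce
  also have "card \<dots> = (\<Sum>i\<in>?P. card (perm_fibre n k (fst i) \<times> perm_fibre n l (snd i)))"
    by (rule card_UN_disjoint) (auto simp: finite_signed_perms finite_perm_fibre, auto simp: perm_fibre_def)
  also have "\<dots> = (\<Sum>i\<in>?B \<times> ?B. if fst i \<circ> snd i = \<sigma> then omegaB n (fst i) k * omegaB n (snd i) l else 0)"
    by (subst sum.inter_filter[symmetric])
      (auto simp: finite_signed_perms card_cartesian_product card_perm_fibre intro!: sum.cong)
  finally show ?thesis
    by (simp add: sum.cartesian_product split_def)
qed

lemma omegaB_convolution:
  assumes \<sigma>: "\<sigma> \<in> signed_perms n"
  shows "(\<Sum>\<pi>\<in>signed_perms n. \<Sum>\<tau>\<in>signed_perms n. if \<pi> \<circ> \<tau> = \<sigma> then omegaB n \<pi> k * omegaB n \<tau> l else 0) =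
    omegaB n \<sigma> (4 * k * l + k + l)"
proof -
  let ?S = "{(g, h) \<in> odd_funs n k \<times> odd_funs n l. sorting_perm n g \<circ> sorting_perm n h = \<sigma>}"
  let ?prod = "\<lambda>(g, h). odd_fun_prod n k g h"
  have inj: "inj_on ?prod ?S"
  proof (rule inj_onI)
    fix x y
    assume xy: "x \<in> ?S" "y \<in> ?S" "?prod x = ?prod y"
    obtain g1 h1 g2 h2 where pairs: "x = (g1, h1)" "y = (g2, h2)"
      by fastforce
    show "x = y"
      using xy odd_fun_prod_inj[of g1 n k g2 h1 l h2] unfolding pairs by simp
  qed
  have image: "?prod ` ?S = perm_fibre n (4 * k * l + k + l) \<sigma>"
  proof
    show "?prod ` ?S \<subseteq> perm_fibre n (4 * k * l + k + l) \<sigma>"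
    proof
      fix f
      assume "f \<in> ?prod ` ?S"
      then obtain g h where "g \<in> odd_funs n k" "h \<in> odd_funs n l"
        "sorting_perm n g \<circ> sorting_perm n h = \<sigma>" "f = odd_fun_prod n k g h"
        by auto
      then show "f \<in> perm_fibre n (4 * k * l + k + l) \<sigma>"
        unfolding perm_fibre_def by (simp add: odd_fun_prod_in_odd_funs sorting_perm_odd_fun_prod)
    qed
    show "perm_fibre n (4 * k * l + k + l) \<sigma> \<subseteq> ?prod ` ?S"
    proof
      fix f
      assume "f \<in> perm_fibre n (4 * k * l + k + l) \<sigma>"
      then have f: "f \<in> odd_funs n (4 * k * l + k + l)" "sorting_perm n f = \<sigma>"
        unfolding perm_fibre_def by auto
      obtain g h where gh: "g \<in> odd_funs n k" "h \<in> odd_funs n l" "odd_fun_prod n k g h = f"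
        using odd_fun_prod_surj[OF f(1)] .
      then have "(g, h) \<in> ?S"
        using sorting_perm_odd_fun_prod[OF gh(1,2)] f(2) by simp
      then show "f \<in> ?prod ` ?S"
        using gh(3) by (intro image_eqI[of _ _ "(g, h)"]) simp_all
    qed
  qed
  have "card ?S = card (perm_fibre n (4 * k * l + k + l) \<sigma>)"
    using card_image[OF inj] unfolding image by simp
  then show ?thesis
    using card_pairs_with_perm_product card_perm_fibre[OF \<sigma>] by simp
qed

lemma poly_omegaB_poly_convolution:
  assumes \<sigma>: "\<sigma> \<in> signed_perms n"
  shows "(\<Sum>\<pi>\<in>signed_perms n. \<Sum>\<tau>\<in>signed_perms n.
      if \<pi> \<circ> \<tau> = \<sigma> then poly (omegaB_poly n \<pi>) X * poly (omegaB_poly n \<tau>) Y else 0) =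
    poly (omegaB_poly n \<sigma>) (4 * X * Y + X + Y)"
proof (rule poly_fun_eq_if_agree_on_nat_pairs[where x = X and y = Y])
  fix X
  show "\<exists>p. \<forall>Y. (\<Sum>\<pi>\<in>signed_perms n. \<Sum>\<tau>\<in>signed_perms n.
      if \<pi> \<circ> \<tau> = \<sigma> then poly (omegaB_poly n \<pi>) X * poly (omegaB_poly n \<tau>) Y else 0) = poly p Y"
    by (rule exI[of _ "\<Sum>\<pi>\<in>signed_perms n. \<Sum>\<tau>\<in>signed_perms n.
        if \<pi> \<circ> \<tau> = \<sigma> then smult (poly (omegaB_poly n \<pi>) X) (omegaB_poly n \<tau>) else 0"])
      (intro allI, simp only: poly_sum, intro sum.cong refl, simp)
  show "\<exists>p. \<forall>Y. poly (omegaB_poly n \<sigma>) (4 * X * Y + X + Y) = poly p Y"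
    by (rule exI[of _ "pcompose (omegaB_poly n \<sigma>) [:X, 4 * X + 1:]"]) (simp add: poly_pcompose algebra_simps)
next
  fix Y
  show "\<exists>p. \<forall>X. (\<Sum>\<pi>\<in>signed_perms n. \<Sum>\<tau>\<in>signed_perms n.
      if \<pi> \<circ> \<tau> = \<sigma> then poly (omegaB_poly n \<pi>) X * poly (omegaB_poly n \<tau>) Y else 0) = poly p X"
    by (rule exI[of _ "\<Sum>\<pi>\<in>signed_perms n. \<Sum>\<tau>\<in>signed_perms n.
        if \<pi> \<circ> \<tau> = \<sigma> then smult (poly (omegaB_poly n \<tau>) Y) (omegaB_poly n \<pi>) else 0"])
      (intro allI, simp only: poly_sum, intro sum.cong refl, simp add: mult.commute)
  show "\<exists>p. \<forall>X. poly (omegaB_poly n \<sigma>) (4 * X * Y + X + Y) = poly p X"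
    by (rule exI[of _ "pcompose (omegaB_poly n \<sigma>) [:Y, 4 * Y + 1:]"]) (simp add: poly_pcompose algebra_simps)
next
  fix k l :: nat
  have "(\<Sum>\<pi>\<in>signed_perms n. \<Sum>\<tau>\<in>signed_perms n.
      if \<pi> \<circ> \<tau> = \<sigma> then poly (omegaB_poly n \<pi>) (of_nat k) * poly (omegaB_poly n \<tau>) (of_nat l) else 0) =
    of_nat (\<Sum>\<pi>\<in>signed_perms n. \<Sum>\<tau>\<in>signed_perms n.
      if \<pi> \<circ> \<tau> = \<sigma> then omegaB n \<pi> k * omegaB n \<tau> l else 0)"
    unfolding of_nat_sum by (intro sum.cong refl) (simp add: poly_omegaB_poly)
  also have "\<dots> = poly (omegaB_poly n \<sigma>) (of_nat (4 * k * l + k + l))"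
    by (simp only: omegaB_convolution[OF \<sigma>] poly_omegaB_poly)
  finally show "(\<Sum>\<pi>\<in>signed_perms n. \<Sum>\<tau>\<in>signed_perms n.
      if \<pi> \<circ> \<tau> = \<sigma> then poly (omegaB_poly n \<pi>) (of_nat k) * poly (omegaB_poly n \<tau>) (of_nat l) else 0) =
    poly (omegaB_poly n \<sigma>) (4 * of_nat k * of_nat l + of_nat k + of_nat l)"
    by simp
qed

theorem theorem3p8:
  fixes n :: nat and x y :: rat
  assumes "n \<ge> 1"
  shows "ga_mult n (rhoB n x) (rhoB n y) = rhoB n (x * y)"
proof
  fix \<sigma>
  show "ga_mult n (rhoB n x) (rhoB n y) \<sigma> = rhoB n (x * y) \<sigma>"
  proof (cases "\<sigma> \<in> signed_perms n")
    case True
    have "ga_mult n (rhoB n x) (rhoB n y) \<sigma> = (\<Sum>\<pi>\<in>signed_perms n. \<Sum>\<tau>\<in>signed_perms n.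
        if \<pi> \<circ> \<tau> = \<sigma> then poly (omegaB_poly n \<pi>) ((x - 1) / 4) * poly (omegaB_poly n \<tau>) ((y - 1) / 4) else 0)"
      unfolding ga_mult_def rhoB_def by (intro sum.cong) auto
    also have "\<dots> = poly (omegaB_poly n \<sigma>) (4 * ((x - 1) / 4) * ((y - 1) / 4) + (x - 1) / 4 + (y - 1) / 4)"
      by (rule poly_omegaB_poly_convolution[OF True])
    also have "4 * ((x - 1) / 4) * ((y - 1) / 4) + (x - 1) / 4 + (y - 1) / 4 = (x * y - 1) / 4"
      by (simp add: field_simps)
    finally show ?thesis
      unfolding rhoB_def using True by simp
  next
    case False
    then show ?thesis
      unfolding ga_mult_def rhoB_def using signed_perms_compose by (auto intro!: sum.neutral)
  qed
qed

end
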